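(* Let $n_1,n_2,n_3$ be integers with $3\le n_1,n_2\le n_3$ and $3\max(n_1,n_2)\le 2n_3\le n_1n_2$. Let $W$ be any set produced by the Middle Cone Construction described below and $u=(n_1+1,n_2+1,n_3+1)$. Then $W$ is a resolving set of $K(\mathbf{n})=K_{n_1}\times K_{n_2}\times K_{n_3}$, and $W\cup\{u\}$ is a resolving set of $K(\mathbf{n}+\mathbf{1})=K_{n_1+1}\times K_{n_2+1}\times K_{n_3+1}$.
   Context: $K(\mathbf{n})$ is the direct product of complete graphs: vertices are triples $(x_1,x_2,x_3)$, $1\le x_i\le n_i$, adjacent iff they differ in every coordinate. A set $W$ of vertices is resolving if for every two distinct vertices $x,y\notin W$ some $w\in W$ has $d(x,w)\ne d(y,w)$ ($d$ = graph distance). Multiplicities: write $n_3=qn_1+r$, $0\le r\le n_1-1$. If $r\le n_1-r$, $(\ell_1,\dots,\ell_{n_1})$ is $(q+1,q)$ repeated $r$ times followed by $n_1-2r$ copies of $q$; if $r>n_1-r$, it is $(q+1,q)$ repeated $n_1-r$ times followed by $2r-n_1$ copies of $q+1$. Let $L_i=\sum_{j<i}\ell_j$; block $i$ is the set of columns $c$ with $L_i<c\le L_i+\ell_i$; $s_i=L_i+1$. Middle Cone Construction: $W=W^L\cup W^R$, each consisting of $n_3$ landmarks indexed by columns $c=1,\dots,n_3$. Left column $c$ in block $i$ is $(i,y^L_c,c)$; right column $c$ in block $i$ is $(i+1,y^R_c,c)$ with $n_1+1$ read as $1$. Even $n_2$, $h=n_2/2$: $y^L_c=((c-1)\bmod h)+1$,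 $y^R_c=h+((c-1)\bmod h)+1$. Odd $n_2$, $f=(n_2-1)/2$, $k=\#\{i:\ell_i>f\}$: let $S=\{s_i:\ell_i>f\}$ if $k\ge2$ and $S=\{1\}$ if $k\le1$. Set $y^L_c=n_2$ for $c\in S$ and fill the other left columns in increasing order with $1,\dots,f,1,\dots,f,\dots$; set $y^R_c=n_2$ for $c\in S+1$ and fill the other right columns in increasing order with $f+1,\dots,2f,f+1,\dots,2f,\dots$. If $k\le1$, additionally change one left landmark of the form $(x,1,z)$ with $x\notin\{1,2,n_1\}$ to $(x,n_2,z)$ (any such choice). *)

theory Defs
  imports Main "HOL-Library.Extended_Nat"
begin

type_synonym vtx = "nat \<times> nat \<times> nat"

definition KV :: "nat \<Rightarrow> nat \<Rightarrow> nat \<Rightarrow> vtx set" where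
  "KV n1 n2 n3 = {1..n1} \<times> {1..n2} \<times> {1..n3}"

definition Kadj :: "vtx \<Rightarrow> vtx \<Rightarrow> bool" where
  "Kadj x y \<longleftrightarrow> fst x \<noteq> fst y \<and> fst (snd x) \<noteq> fst (snd y) \<and> snd (snd x) \<noteq> snd (snd y)"

definition KE :: "nat \<Rightarrow> nat \<Rightarrow> nat \<Rightarrow> vtx rel" where
  "KE n1 n2 n3 = {(x, y). x \<in> KV n1 n2 n3 \<and> y \<in> KV n1 n2 n3 \<and> Kadj x y}"

definition Kdist :: "nat \<Rightarrow> nat \<Rightarrow> nat \<Rightarrow> vtx \<Rightarrow> vtx \<Rightarrow> enat" where
  "Kdist n1 n2 n3 x y =
     (if \<exists>k. (x, y) \<in> (KE n1 n2 n3) ^^ k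
      then enat (LEAST k. (x, y) \<in> (KE n1 n2 n3) ^^ k) else \<infinity>)"

definition resolving :: "nat \<Rightarrow> nat \<Rightarrow> nat \<Rightarrow> vtx set \<Rightarrow> bool" where
  "resolving n1 n2 n3 W \<longleftrightarrow> W \<subseteq> KV n1 n2 n3 \<and>
     (\<forall>x \<in> KV n1 n2 n3 - W. \<forall>y \<in> KV n1 n2 n3 - W. x \<noteq> y \<longrightarrow>
        (\<exists>w \<in> W. Kdist n1 n2 n3 x w \<noteq> Kdist n1 n2 n3 y w))"

definition ell :: "nat \<Rightarrow> nat \<Rightarrow> nat \<Rightarrow> nat" where
  "ell n1 n3 i =
     (let q = n3 div n1; r = n3 mod n1 in
      if r \<le> n1 - r then
        (if i \<le> 2 * r then (if odd i then q + 1 else q) else q)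
      else
        (if i \<le> 2 * (n1 - r) then (if odd i then q + 1 else q) else q + 1))"

definition Lsum :: "nat \<Rightarrow> nat \<Rightarrow> nat \<Rightarrow> nat" where
  "Lsum n1 n3 i = (\<Sum>j \<in> {1..<i}. ell n1 n3 j)"

definition sblk :: "nat \<Rightarrow> nat \<Rightarrow> nat \<Rightarrow> nat" where
  "sblk n1 n3 i = Lsum n1 n3 i + 1"

definition blk :: "nat \<Rightarrow> nat \<Rightarrow> nat \<Rightarrow> nat" where
  "blk n1 n3 c = (THE i. i \<in> {1..n1} \<and> Lsum n1 n3 i < c \<and> c \<le> Lsum n1 n3 i + ell n1 n3 i)"

definition rank_out :: "nat set \<Rightarrow> nat \<Rightarrow> nat" where
  "rank_out A c = card {c' \<in> {1..c}. c' \<notin> A}"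

definition kcnt :: "nat \<Rightarrow> nat \<Rightarrow> nat \<Rightarrow> nat" where
  "kcnt n1 n2 n3 = card {i \<in> {1..n1}. ell n1 n3 i > (n2 - 1) div 2}"

definition Sset :: "nat \<Rightarrow> nat \<Rightarrow> nat \<Rightarrow> nat set" where
  "Sset n1 n2 n3 =
     (if kcnt n1 n2 n3 \<ge> 2
      then {sblk n1 n3 i | i. i \<in> {1..n1} \<and> ell n1 n3 i > (n2 - 1) div 2}
      else {1})"

definition yL :: "nat \<Rightarrow> nat \<Rightarrow> nat \<Rightarrow> nat \<Rightarrow> nat" where
  "yL n1 n2 n3 c =
     (if even n2 then ((c - 1) mod (n2 div 2)) + 1
      else if c \<in> Sset n1 n2 n3 then n2
      else ((rank_out (Sset n1 n2 n3) c - 1) mod ((n2 - 1) div 2)) + 1)"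

definition yR :: "nat \<Rightarrow> nat \<Rightarrow> nat \<Rightarrow> nat \<Rightarrow> nat" where
  "yR n1 n2 n3 c =
     (if even n2 then n2 div 2 + ((c - 1) mod (n2 div 2)) + 1
      else if c \<in> (\<lambda>s. s + 1) ` Sset n1 n2 n3 then n2
      else (n2 - 1) div 2
           + ((rank_out ((\<lambda>s. s + 1) ` Sset n1 n2 n3) c - 1) mod ((n2 - 1) div 2)) + 1)"

definition WL :: "nat \<Rightarrow> nat \<Rightarrow> (nat \<Rightarrow> nat) \<Rightarrow> vtx set" where
  "WL n1 n3 y = {(blk n1 n3 c, y c, c) | c. c \<in> {1..n3}}"

definition WR :: "nat \<Rightarrow> nat \<Rightarrow> nat \<Rightarrow> vtx set" where
  "WR n1 n2 n3 = {(if blk n1 n3 c = n1 then 1 else blk n1 n3 c + 1, yR n1 n2 n3 c, c) | c. c \<in> {1..n3}}"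

text \<open>W is a set produced by the Middle Cone Construction (with any admissible choice
  of the modified left landmark in the case n2 odd, k \<le> 1).\<close>
definition middle_cone :: "nat \<Rightarrow> nat \<Rightarrow> nat \<Rightarrow> vtx set \<Rightarrow> bool" where
  "middle_cone n1 n2 n3 W \<longleftrightarrow>
     (if even n2 \<or> kcnt n1 n2 n3 \<ge> 2
      then W = WL n1 n3 (yL n1 n2 n3) \<union> WR n1 n2 n3
      else (\<exists>z \<in> {1..n3}. yL n1 n2 n3 z = 1 \<and> blk n1 n3 z \<notin> {1, 2, n1} \<and>
              W = WL n1 n3 ((yL n1 n2 n3)(z := n2)) \<union> WR n1 n2 n3))"

end

theory Submission
  imports Defs
begin

text \<open>
  Every coordinate takes at least three values, so two distinct vertices have a common
  neighbour: all distances are 1 or 2, and a landmark distinguishes two vertices exactly when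
  it is adjacent to one of them and not to the other. Vertices differing in the first (second)
  coordinate are distinguished once every row (height) holds a landmark avoiding any prescribed
  values in the other two coordinates. The vertices \<open>(a, b, c)\<close> and \<open>(a, b, c')\<close> stay
  undistinguished only if \<open>(a, b)\<close> meets every landmark of the layers \<open>c\<close> and \<open>c'\<close> in a
  coordinate. Layer \<open>c\<close> of the Middle Cone carries the landmarks \<open>(B c, Y c, c)\<close> and
  \<open>(\<sigma> (B c), R c, c)\<close>, where \<open>B c\<close> is the block of \<open>c\<close> and \<open>\<sigma>\<close> the cyclic successor,
  so \<open>(a, b)\<close> must be a cross corner \<open>(B c, R c)\<close> or \<open>(\<sigma> (B c), Y c)\<close>. Cross corners of
  distinct layers differ because heights are injective within blocks and equal left and right
  heights occur only in non-adjacent blocks; together with the facts that every row and every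
  height carries at least three landmarks, this is the arithmetic content, coming from the block
  lengths \<open>q\<close> or \<open>q + 1\<close> and from \<open>3 max n1 n2 \<le> 2 n3 \<le> n1 n2\<close>. In \<open>K(n + 1)\<close> the new
  vertex \<open>u\<close> is adjacent exactly to the vertices of \<open>K(n)\<close>, so it separates old from new
  vertices, and the old landmarks separate the remaining pairs.
\<close>

section \<open>Distances in \<open>K(n)\<close>\<close>

lemma ex_avoid_two_values:
  assumes "3 \<le> (n::nat)"
  shows "\<exists>c\<in>{1..n}. c \<noteq> a \<and> c \<noteq> b"
  using assms
  by (cases "a = 1 \<or> b = 1"; cases "a = 2 \<or> b = 2") (auto intro: bexI[of _ 1] bexI[of _ 2] bexI[of _ 3])

lemma Kdist_eqI:
  assumes "(x, y) \<in> KE n1 n2 n3 ^^ k" and "\<And>j. j < k \<Longrightarrow> (x, y) \<notin> KE n1 n2 n3 ^^ j"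
  shows "Kdist n1 n2 n3 x y = enat k"
proof -
  have "(LEAST j. (x, y) \<in> KE n1 n2 n3 ^^ j) = k"
    using assms by (intro Least_equality) (auto simp: not_less[symmetric])
  then show ?thesis
    using assms(1) unfolding Kdist_def by auto
qed

lemma Kdist_KV:
  assumes "3 \<le> n1" "3 \<le> n2" "3 \<le> n3" "x \<in> KV n1 n2 n3" "y \<in> KV n1 n2 n3" "x \<noteq> y"
  shows "Kdist n1 n2 n3 x y = (if Kadj x y then 1 else 2)"
proof -
  obtain x1 x2 x3 y1 y2 y3 where xy: "x = (x1, x2, x3)" "y = (y1, y2, y3)"
    by (cases x, cases y) auto
  obtain z1 z2 z3 where z: "z1 \<in> {1..n1}" "z1 \<noteq> x1" "z1 \<noteq> y1" "z2 \<in> {1..n2}" "z2 \<noteq> x2" "z2 \<noteq> y2"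
      "z3 \<in> {1..n3}" "z3 \<noteq> x3" "z3 \<noteq> y3"
    using ex_avoid_two_values assms(1-3) by meson
  have "(x, (z1, z2, z3)) \<in> KE n1 n2 n3" "((z1, z2, z3), y) \<in> KE n1 n2 n3"
    using assms(4,5) z by (auto simp: KE_def KV_def Kadj_def xy)
  then have two: "(x, y) \<in> KE n1 n2 n3 ^^ 2"
    by (auto simp: numeral_2_eq_2 relcomp.simps)
  have one: "(x, y) \<in> KE n1 n2 n3 ^^ 1 \<longleftrightarrow> Kadj x y"
    using assms(4,5) by (simp add: KE_def)
  have "j < 2 \<Longrightarrow> (x, y) \<notin> KE n1 n2 n3 ^^ j" if "\<not> Kadj x y" for j
    using one that assms(6) by (cases j) (auto simp: less_Suc_eq)
  moreover have "j < 1 \<Longrightarrow> (x, y) \<notin> KE n1 n2 n3 ^^ j" for j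
    using assms(6) by simp
  ultimately show ?thesis
    using Kdist_eqI[where k = 1] Kdist_eqI[OF two] one
    by (auto simp: one_enat_def numeral_eq_enat)
qed

lemma resolving_if_adjacency_separating:
  assumes "3 \<le> n1" "3 \<le> n2" "3 \<le> n3" "W \<subseteq> KV n1 n2 n3"
    and sep: "\<And>x y. x \<in> KV n1 n2 n3 - W \<Longrightarrow> y \<in> KV n1 n2 n3 - W \<Longrightarrow> x \<noteq> y \<Longrightarrow>
      \<exists>w\<in>W. Kadj x w \<noteq> Kadj y w"
  shows "resolving n1 n2 n3 W"
  unfolding resolving_def
proof (intro conjI ballI impI assms(4))
  fix x y assume x: "x \<in> KV n1 n2 n3 - W" and y: "y \<in> KV n1 n2 n3 - W" and "x \<noteq> y"
  then obtain w where w: "w \<in> W" "Kadj x w \<noteq> Kadj y w"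
    using sep by blast
  then have "x \<noteq> w" "y \<noteq> w" "w \<in> KV n1 n2 n3"
    using x y assms(4) by auto
  then show "\<exists>w\<in>W. Kdist n1 n2 n3 x w \<noteq> Kdist n1 n2 n3 y w"
    using w x y Kdist_KV[OF assms(1-3)] by (intro bexI[OF _ w(1)]) auto
qed

section \<open>Landmark sets\<close>

text \<open>If \<open>blocked W a b c\<close> holds, no landmark of layer \<open>c\<close> is adjacent to a vertex
  \<open>(a, b, c')\<close> with \<open>c' \<noteq> c\<close>.\<close>
definition blocked :: "vtx set \<Rightarrow> nat \<Rightarrow> nat \<Rightarrow> nat \<Rightarrow> bool" where
  "blocked W a b c \<longleftrightarrow> (\<forall>(a', b', c') \<in> W. c' = c \<longrightarrow> a' = a \<or> b' = b)"

locale landmark_set =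
  fixes n1 n2 n3 :: nat and W :: "vtx set"
  assumes n1: "3 \<le> n1" and n2: "3 \<le> n2" and n3: "3 \<le> n3"
    and W_sub: "W \<subseteq> KV n1 n2 n3"
    and fst_cover: "a \<in> {1..n1} \<Longrightarrow> \<exists>(a', b', c') \<in> W. a' = a \<and> b' \<noteq> b \<and> c' \<noteq> c"
    and snd_cover: "b \<in> {1..n2} \<Longrightarrow> \<exists>(a', b', c') \<in> W. b' = b \<and> a' \<noteq> a \<and> c' \<noteq> c"
    and blocked_range: "c \<in> {1..n3} \<Longrightarrow> blocked W a b c \<Longrightarrow> a \<in> {1..n1} \<and> b \<in> {1..n2}"
    and blocked_unique: "c \<in> {1..n3} \<Longrightarrow> c' \<in> {1..n3} \<Longrightarrow> blocked W a b c \<Longrightarrow> blocked W a b c' \<Longrightarrow> c = c'"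
begin

lemma separates_fst:
  assumes "a \<in> {1..n1}" "a \<noteq> a'"
  shows "\<exists>w\<in>W. Kadj (a, b, c) w \<noteq> Kadj (a', b', c') w"
proof -
  obtain \<beta> \<gamma> where "(a, \<beta>, \<gamma>) \<in> W" "\<beta> \<noteq> b'" "\<gamma> \<noteq> c'"
    using fst_cover[OF assms(1), of b' c'] by auto
  then show ?thesis
    using assms(2) by (intro bexI) (auto simp: Kadj_def)
qed

lemma separates_snd:
  assumes "b \<in> {1..n2}" "b \<noteq> b'"
  shows "\<exists>w\<in>W. Kadj (a, b, c) w \<noteq> Kadj (a', b', c') w"
proof -
  obtain \<alpha> \<gamma> where "(\<alpha>, b, \<gamma>) \<in> W" "\<alpha> \<noteq> a'" "\<gamma> \<noteq> c'"
    using snd_cover[OF assms(1), of a' c'] by auto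
  then show ?thesis
    using assms(2) by (intro bexI) (auto simp: Kadj_def)
qed

lemma blocked_if_not_separated:
  assumes "c \<noteq> c'" and "\<forall>w\<in>W. Kadj (a, b, c) w = Kadj (a, b, c') w"
  shows "blocked W a b c"
  using assms unfolding blocked_def Kadj_def by fastforce

lemma separates_layers:
  assumes "c \<noteq> c'" "c \<in> {1..n3 + 1}" "c' \<in> {1..n3 + 1}"
    and side: "(a, b, c) \<in> KV n1 n2 n3 \<longleftrightarrow> (a, b, c') \<in> KV n1 n2 n3"
  shows "\<exists>w\<in>W. Kadj (a, b, c) w \<noteq> Kadj (a, b, c') w"
proof (rule ccontr)
  assume "\<not> ?thesis"
  then have "c \<le> n3 \<Longrightarrow> blocked W a b c" "c' \<le> n3 \<Longrightarrow> blocked W a b c'"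
    using assms(1) blocked_if_not_separated[of c c' a b] blocked_if_not_separated[of c' c a b] by auto
  then show False
    using assms blocked_unique[of c c' a b] blocked_range[of c a b] blocked_range[of c' a b]
    unfolding KV_def by (cases "c \<le> n3"; cases "c' \<le> n3") auto
qed

lemma separates_same_side:
  assumes x: "x \<in> KV (n1 + 1) (n2 + 1) (n3 + 1)" and y: "y \<in> KV (n1 + 1) (n2 + 1) (n3 + 1)"
    and "x \<noteq> y" and side: "x \<in> KV n1 n2 n3 \<longleftrightarrow> y \<in> KV n1 n2 n3"
  shows "\<exists>w\<in>W. Kadj x w \<noteq> Kadj y w"
proof -
  obtain a b c a' b' c' where xy: "x = (a, b, c)" "y = (a', b', c')"
    by (cases x, cases y) auto
  have ranges: "a \<in> {1..n1 + 1}" "a' \<in> {1..n1 + 1}" "b \<in> {1..n2 + 1}" "b' \<in> {1..n2 + 1}"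
    "c \<in> {1..n3 + 1}" "c' \<in> {1..n3 + 1}"
    using x y by (auto simp: xy KV_def)
  consider "a \<noteq> a'" | "a = a'" "b \<noteq> b'" | "a = a'" "b = b'" "c \<noteq> c'"
    using \<open>x \<noteq> y\<close> xy by auto
  then show ?thesis
  proof cases
    case 1
    then have "a \<in> {1..n1} \<or> a' \<in> {1..n1}"
      using ranges by auto
    then show ?thesis
      using separates_fst[of a a' b c b' c'] separates_fst[of a' a b' c' b c] 1
      unfolding xy by (metis (no_types))
  next
    case 2
    then have "b \<in> {1..n2} \<or> b' \<in> {1..n2}"
      using ranges by auto
    then show ?thesis
      using separates_snd[of b b' a c a' c'] separates_snd[of b' b a' c' a c] 2
      unfolding xy by (metis (no_types))
  next
    case 3
    then show ?thesis
      using separates_layers[of c c' a b] ranges side unfolding xy by simp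
  qed
qed

lemma resolving_K: "resolving n1 n2 n3 W"
  using n1 n2 n3 W_sub
proof (rule resolving_if_adjacency_separating)
  fix x y assume "x \<in> KV n1 n2 n3 - W" "y \<in> KV n1 n2 n3 - W" "x \<noteq> y"
  then show "\<exists>w\<in>W. Kadj x w \<noteq> Kadj y w"
    by (intro separates_same_side) (auto simp: KV_def)
qed

lemma resolving_K_succ: "resolving (n1 + 1) (n2 + 1) (n3 + 1) (insert (n1 + 1, n2 + 1, n3 + 1) W)"
proof (rule resolving_if_adjacency_separating)
  let ?u = "(n1 + 1, n2 + 1, n3 + 1)"
  show "3 \<le> n1 + 1" "3 \<le> n2 + 1" "3 \<le> n3 + 1"
    using n1 n2 n3 by auto
  show "insert ?u W \<subseteq> KV (n1 + 1) (n2 + 1) (n3 + 1)"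
    using W_sub by (auto simp: KV_def)
  fix x y assume x: "x \<in> KV (n1 + 1) (n2 + 1) (n3 + 1) - insert ?u W"
    and y: "y \<in> KV (n1 + 1) (n2 + 1) (n3 + 1) - insert ?u W" and "x \<noteq> y"
  have adj_u: "Kadj v ?u \<longleftrightarrow> v \<in> KV n1 n2 n3" if "v \<in> KV (n1 + 1) (n2 + 1) (n3 + 1)" for v
    using that by (cases v) (auto simp: KV_def Kadj_def)
  show "\<exists>w\<in>insert ?u W. Kadj x w \<noteq> Kadj y w"
  proof (cases "x \<in> KV n1 n2 n3 \<longleftrightarrow> y \<in> KV n1 n2 n3")
    case True
    then show ?thesis
      using separates_same_side x y \<open>x \<noteq> y\<close> by blast
  next
    case False
    then show ?thesis
      using adj_u x y by blast
  qed
qed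

end

section \<open>Column systems\<close>

lemma ex_avoid_point_and_value:
  assumes "finite C" "3 \<le> card C" "inj_on g C"
  shows "\<exists>c\<in>C. c \<noteq> v \<and> g c \<noteq> u"
proof (rule ccontr)
  assume "\<not> ?thesis"
  then have "C \<subseteq> insert v {c \<in> C. g c = u}"
    by blast
  moreover have "card {c \<in> C. g c = u} \<le> 1"
    using assms(1,3) by (auto simp: card_le_Suc0_iff_eq inj_on_def)
  ultimately have "card C \<le> Suc (card {c \<in> C. g c = u})"
    using card_mono[of "insert v {c \<in> C. g c = u}" C] assms(1)
    by (simp add: card_insert_if split: if_splits)
  then show False
    using assms(2) \<open>card {c \<in> C. g c = u} \<le> 1\<close> by simp
qed

definition cyc_succ :: "nat \<Rightarrow> nat \<Rightarrow> nat" where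
  "cyc_succ n i = (if i = n then 1 else i + 1)"

lemma cyc_succ_range: "i \<in> {1..n} \<Longrightarrow> cyc_succ n i \<in> {1..n}"
  by (auto simp: cyc_succ_def)

lemma cyc_succ_neq: "2 \<le> n \<Longrightarrow> cyc_succ n i \<noteq> i"
  by (auto simp: cyc_succ_def)

lemma inj_on_cyc_succ: "inj_on (cyc_succ n) {1..n}"
  by (auto simp: inj_on_def cyc_succ_def)

lemma cyc_succ_surj:
  assumes "a \<in> {1..n}"
  obtains p where "p \<in> {1..n}" "cyc_succ n p = a"
proof (cases "a = 1")
  case True
  then show ?thesis
    using assms by (intro that[of n]) (auto simp: cyc_succ_def)
next
  case False
  then show ?thesis
    using assms by (intro that[of "a - 1"]) (auto simp: cyc_succ_def)
qed

text \<open>With \<open>B\<close> the block map this is the set \<open>W\<^sup>L \<union> W\<^sup>R\<close> of the Middle Cone Construction.\<close>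
definition column_landmarks :: "nat \<Rightarrow> nat \<Rightarrow> (nat \<Rightarrow> nat) \<Rightarrow> (nat \<Rightarrow> nat) \<Rightarrow> (nat \<Rightarrow> nat) \<Rightarrow> vtx set"
  where "column_landmarks n1 n3 B Y R =
    {(B c, Y c, c) | c. c \<in> {1..n3}} \<union> {(cyc_succ n1 (B c), R c, c) | c. c \<in> {1..n3}}"

text \<open>\<open>levels_apart\<close> says that a left and a right landmark of equal height never lie in the
  same row, and that the cross corners \<open>(B c', R c')\<close> and \<open>(cyc_succ n1 (B c), Y c)\<close> of
  different layers never coincide.\<close>
locale column_system =
  fixes n1 n2 n3 :: nat and B Y R :: "nat \<Rightarrow> nat"
  assumes n1: "2 \<le> n1"
    and B_range: "c \<in> {1..n3} \<Longrightarrow> B c \<in> {1..n1}"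
    and Y_range: "c \<in> {1..n3} \<Longrightarrow> Y c \<in> {1..n2}"
    and R_range: "c \<in> {1..n3} \<Longrightarrow> R c \<in> {1..n2}"
    and Y_neq_R: "c \<in> {1..n3} \<Longrightarrow> Y c \<noteq> R c"
    and inj_B_Y: "inj_on (\<lambda>c. (B c, Y c)) {1..n3}"
    and inj_B_R: "inj_on (\<lambda>c. (B c, R c)) {1..n3}"
    and levels_apart: "c \<in> {1..n3} \<Longrightarrow> c' \<in> {1..n3} \<Longrightarrow> Y c = R c' \<Longrightarrow>
      B c \<noteq> cyc_succ n1 (B c') \<and> B c' \<noteq> cyc_succ n1 (B c)"
begin

abbreviation W where "W \<equiv> column_landmarks n1 n3 B Y R"

lemma left_mem: "c \<in> {1..n3} \<Longrightarrow> (B c, Y c, c) \<in> W"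
  by (auto simp: column_landmarks_def)

lemma right_mem: "c \<in> {1..n3} \<Longrightarrow> (cyc_succ n1 (B c), R c, c) \<in> W"
  by (auto simp: column_landmarks_def)

lemma W_sub: "W \<subseteq> KV n1 n2 n3"
proof
  fix w assume "w \<in> W"
  then obtain c where c: "c \<in> {1..n3}" "w = (B c, Y c, c) \<or> w = (cyc_succ n1 (B c), R c, c)"
    unfolding column_landmarks_def by blast
  then show "w \<in> KV n1 n2 n3"
    using B_range[OF c(1)] Y_range[OF c(1)] R_range[OF c(1)] cyc_succ_range[OF B_range[OF c(1)]]
    by (auto simp: KV_def)
qed

lemma succ_B_eq_iff: "c \<in> {1..n3} \<Longrightarrow> c' \<in> {1..n3} \<Longrightarrow> cyc_succ n1 (B c) = cyc_succ n1 (B c') \<longleftrightarrow> B c = B c'"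
  by (intro inj_on_eq_iff[OF inj_on_cyc_succ] B_range)

lemma left_left_eq: "c \<in> {1..n3} \<Longrightarrow> c' \<in> {1..n3} \<Longrightarrow> B c = B c' \<Longrightarrow> Y c = Y c' \<Longrightarrow> c = c'"
  using inj_onD[OF inj_B_Y, of c c'] by simp

lemma right_right_eq:
  "c \<in> {1..n3} \<Longrightarrow> c' \<in> {1..n3} \<Longrightarrow> cyc_succ n1 (B c) = cyc_succ n1 (B c') \<Longrightarrow> R c = R c' \<Longrightarrow> c = c'"
  using inj_onD[OF inj_B_R, of c c'] succ_B_eq_iff[of c c'] by simp

lemma inj_on_row_heights:
  "inj_on (\<lambda>c. if B c = a then Y c else R c) {c \<in> {1..n3}. B c = a \<or> cyc_succ n1 (B c) = a}"
proof (rule inj_onI)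
  fix c c' assume "c \<in> {c \<in> {1..n3}. B c = a \<or> cyc_succ n1 (B c) = a}"
    and "c' \<in> {c \<in> {1..n3}. B c = a \<or> cyc_succ n1 (B c) = a}"
    and eq: "(if B c = a then Y c else R c) = (if B c' = a then Y c' else R c')"
  then have c: "c \<in> {1..n3}" "c' \<in> {1..n3}" and row: "B c = a \<or> cyc_succ n1 (B c) = a"
    "B c' = a \<or> cyc_succ n1 (B c') = a"
    by auto
  consider "B c = a" "B c' = a" | "B c \<noteq> a" "B c' \<noteq> a" | "B c = a" "B c' \<noteq> a" | "B c \<noteq> a" "B c' = a"
    by blast
  then show "c = c'"
  proof cases
    case 1
    then show ?thesis using eq left_left_eq[OF c] by simp
  next
    case 2
    then show ?thesis using eq row right_right_eq[OF c] by simp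
  next
    case 3
    then show ?thesis using eq row levels_apart[OF c] by simp
  next
    case 4
    then show ?thesis using eq row levels_apart[OF c(2,1)] by simp
  qed
qed

lemma inj_on_level_rows:
  "inj_on (\<lambda>c. if Y c = b then B c else cyc_succ n1 (B c)) {c \<in> {1..n3}. Y c = b \<or> R c = b}"
proof (rule inj_onI)
  fix c c' assume "c \<in> {c \<in> {1..n3}. Y c = b \<or> R c = b}" and "c' \<in> {c \<in> {1..n3}. Y c = b \<or> R c = b}"
    and eq: "(if Y c = b then B c else cyc_succ n1 (B c)) = (if Y c' = b then B c' else cyc_succ n1 (B c'))"
  then have c: "c \<in> {1..n3}" "c' \<in> {1..n3}" and level: "Y c = b \<or> R c = b" "Y c' = b \<or> R c' = b"
    by auto
  consider "Y c = b" "Y c' = b" | "Y c \<noteq> b" "Y c' \<noteq> b" | "Y c = b" "Y c' \<noteq> b" | "Y c \<noteq> b" "Y c' = b"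
    by blast
  then show "c = c'"
  proof cases
    case 1
    then show ?thesis using eq left_left_eq[OF c] by simp
  next
    case 2
    then show ?thesis using eq level right_right_eq[OF c] by simp
  next
    case 3
    then show ?thesis using eq level levels_apart[OF c] by simp
  next
    case 4
    then show ?thesis using eq level levels_apart[OF c(2,1)] by simp
  qed
qed

lemma fst_cover_of_card:
  assumes "3 \<le> card {c \<in> {1..n3}. B c = a \<or> cyc_succ n1 (B c) = a}"
  shows "\<exists>(a', b', c') \<in> W. a' = a \<and> b' \<noteq> b \<and> c' \<noteq> c"
proof -
  obtain c0 where c0: "c0 \<in> {1..n3}" "B c0 = a \<or> cyc_succ n1 (B c0) = a" "c0 \<noteq> c"
    "(if B c0 = a then Y c0 else R c0) \<noteq> b"
    using ex_avoid_point_and_value[OF _ assms inj_on_row_heights, of c b] by auto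
  show ?thesis
  proof (cases "B c0 = a")
    case True
    then show ?thesis using c0 left_mem[of c0] by (intro bexI[of _ "(B c0, Y c0, c0)"]) auto
  next
    case False
    then show ?thesis using c0 right_mem[of c0] by (intro bexI[of _ "(cyc_succ n1 (B c0), R c0, c0)"]) auto
  qed
qed

lemma snd_cover_of_card:
  assumes "3 \<le> card {c \<in> {1..n3}. Y c = b \<or> R c = b}"
  shows "\<exists>(a', b', c') \<in> W. b' = b \<and> a' \<noteq> a \<and> c' \<noteq> c"
proof -
  obtain c0 where c0: "c0 \<in> {1..n3}" "Y c0 = b \<or> R c0 = b" "c0 \<noteq> c"
    "(if Y c0 = b then B c0 else cyc_succ n1 (B c0)) \<noteq> a"
    using ex_avoid_point_and_value[OF _ assms inj_on_level_rows, of c a] by auto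
  show ?thesis
  proof (cases "Y c0 = b")
    case True
    then show ?thesis using c0 left_mem[of c0] by (intro bexI[of _ "(B c0, Y c0, c0)"]) auto
  next
    case False
    then show ?thesis using c0 right_mem[of c0] by (intro bexI[of _ "(cyc_succ n1 (B c0), R c0, c0)"]) auto
  qed
qed

lemma blocked_cross:
  assumes "c \<in> {1..n3}" "blocked W a b c"
  shows "(B c = a \<and> R c = b) \<or> (cyc_succ n1 (B c) = a \<and> Y c = b)"
proof -
  have "B c = a \<or> Y c = b" "cyc_succ n1 (B c) = a \<or> R c = b"
    using assms(2) left_mem[OF assms(1)] right_mem[OF assms(1)] unfolding blocked_def by auto
  then show ?thesis
    using Y_neq_R[OF assms(1)] cyc_succ_neq[OF n1, of "B c"] by auto
qed

lemma blocked_range: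
  assumes "c \<in> {1..n3}" "blocked W a b c"
  shows "a \<in> {1..n1} \<and> b \<in> {1..n2}"
  using blocked_cross[OF assms] B_range[OF assms(1)] Y_range[OF assms(1)] R_range[OF assms(1)]
    cyc_succ_range[OF B_range[OF assms(1)]] by auto

lemma blocked_unique:
  assumes "c \<in> {1..n3}" "c' \<in> {1..n3}" "blocked W a b c" "blocked W a b c'"
  shows "c = c'"
proof -
  note cross = blocked_cross[OF assms(1,3)] blocked_cross[OF assms(2,4)]
  consider "B c = a" "R c = b" "B c' = a" "R c' = b"
    | "cyc_succ n1 (B c) = a" "Y c = b" "cyc_succ n1 (B c') = a" "Y c' = b"
    | "B c = a" "R c = b" "cyc_succ n1 (B c') = a" "Y c' = b"
    | "cyc_succ n1 (B c) = a" "Y c = b" "B c' = a" "R c' = b"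
    using cross by blast
  then show ?thesis
  proof cases
    case 1
    then show ?thesis using right_right_eq[OF assms(1,2)] by simp
  next
    case 2
    then show ?thesis using left_left_eq[OF assms(1,2)] succ_B_eq_iff[OF assms(1,2)] by simp
  next
    case 3
    then show ?thesis using levels_apart[OF assms(2,1)] by simp
  next
    case 4
    then show ?thesis using levels_apart[OF assms(1,2)] by simp
  qed
qed

lemma landmark_set_of_cards:
  assumes "3 \<le> n1" "3 \<le> n2" "3 \<le> n3"
    and "\<And>a. a \<in> {1..n1} \<Longrightarrow> 3 \<le> card {c \<in> {1..n3}. B c = a \<or> cyc_succ n1 (B c) = a}"
    and "\<And>b. b \<in> {1..n2} \<Longrightarrow> 3 \<le> card {c \<in> {1..n3}. Y c = b \<or> R c = b}"
  shows "landmark_set n1 n2 n3 W"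
proof
  show "W \<subseteq> KV n1 n2 n3" by (rule W_sub)
  show "\<exists>(a', b', c') \<in> W. a' = a \<and> b' \<noteq> b \<and> c' \<noteq> c" if "a \<in> {1..n1}" for a b c
    using fst_cover_of_card assms(4)[OF that] by blast
  show "\<exists>(a', b', c') \<in> W. b' = b \<and> a' \<noteq> a \<and> c' \<noteq> c" if "b \<in> {1..n2}" for a b c
    using snd_cover_of_card assms(5)[OF that] by blast
  show "a \<in> {1..n1} \<and> b \<in> {1..n2}" if "c \<in> {1..n3}" "blocked W a b c" for a b c
    using blocked_range that by blast
  show "c = c'" if "c \<in> {1..n3}" "c' \<in> {1..n3}" "blocked W a b c" "blocked W a b c'" for a b c c'
    using blocked_unique that by blast
qed (use assms in auto)

end

section \<open>Blocks\<close>

lemma card_odd_atLeastAtMost: "card {i \<in> {1..2 * m}. odd (i::nat)} = m"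
proof -
  have "{i \<in> {1..2 * m}. odd (i::nat)} = (\<lambda>j. 2 * j + 1) ` {..<m}"
    by (auto elim!: oddE)
  then show ?thesis
    by (simp add: card_image inj_on_def)
qed

locale middle_cone_params =
  fixes n1 n2 n3 :: nat
  assumes n1_ge: "3 \<le> n1" and n2_ge: "3 \<le> n2" and n1_le: "n1 \<le> n3" and n2_le: "n2 \<le> n3"
    and three_max_le: "3 * max n1 n2 \<le> 2 * n3" and le_prod: "2 * n3 \<le> n1 * n2"
begin

definition q where "q = n3 div n1"
definition r where "r = n3 mod n1"

abbreviation "len i \<equiv> ell n1 n3 i"
abbreviation "L i \<equiv> Lsum n1 n3 i"
abbreviation "bk c \<equiv> blk n1 n3 c"

lemma n3_eq: "n3 = q * n1 + r"
  by (simp add: q_def r_def)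

lemma r_less: "r < n1"
  using n1_ge by (simp add: r_def)

lemma q_pos: "1 \<le> q"
  using n1_ge n1_le by (simp add: q_def div_greater_zero_iff Suc_le_eq)

lemma len_eq: "len i =
  (if (if r \<le> n1 - r then i \<le> 2 * r \<and> odd i else (i \<le> 2 * (n1 - r) \<longrightarrow> odd i)) then Suc q else q)"
  unfolding ell_def Let_def q_def[symmetric] r_def[symmetric] by auto

lemma len_bounds: "q \<le> len i" "len i \<le> Suc q" "1 \<le> len i"
  using len_eq[of i] q_pos by (auto split: if_splits)

lemma card_long_blocks: "card {i \<in> {1..n1}. len i = Suc q} = r"
proof (cases "r \<le> n1 - r")
  case True
  then have "{i \<in> {1..n1}. len i = Suc q} = {i \<in> {1..2 * r}. odd i}"
    by (auto simp: len_eq)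
  then show ?thesis
    by (simp only: card_odd_atLeastAtMost)
next
  case False
  then have "{i \<in> {1..n1}. len i = Suc q} = {i \<in> {1..2 * (n1 - r)}. odd i} \<union> {2 * (n1 - r)<..n1}"
    by (auto simp: len_eq)
  moreover have "card ({i \<in> {1..2 * (n1 - r)}. odd i} \<union> {2 * (n1 - r)<..n1})
      = card {i \<in> {1..2 * (n1 - r)}. odd i} + card {2 * (n1 - r)<..n1}"
    by (rule card_Un_disjoint) auto
  ultimately show ?thesis
    using False r_less card_odd_atLeastAtMost[of "n1 - r"] by simp
qed

lemma sum_len: "(\<Sum>i\<in>{1..n1}. len i) = n3"
proof -
  have "(\<Sum>i\<in>{1..n1}. len i) = (\<Sum>i\<in>{1..n1}. q + (if len i = Suc q then 1 else 0))"
  proof (rule sum.cong)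
    show "len i = q + (if len i = Suc q then 1 else 0)" for i
      using len_bounds(1,2)[of i] by (cases "len i = Suc q") auto
  qed simp
  also have "\<dots> = n1 * q + card {i \<in> {1..n1}. len i = Suc q}"
    by (simp add: sum.distrib sum.inter_filter[symmetric])
  finally show ?thesis
    using card_long_blocks n3_eq by (simp add: mult.commute)
qed

lemma L_one: "L 1 = 0"
  by (simp add: Lsum_def)

lemma L_Suc: "1 \<le> i \<Longrightarrow> L (Suc i) = L i + len i"
  by (simp add: Lsum_def sum.atLeastLessThan_Suc)

lemma L_end: "L (Suc n1) = n3"
  using sum_len by (simp add: Lsum_def atLeastLessThanSuc_atLeastAtMost)

lemma L_mono:
  assumes "1 \<le> i" "i \<le> j"
  shows "L i + (j - i) \<le> L j"
  using assms(2)
proof (induction j rule: dec_induct)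
  case (step j)
  then show ?case
    using L_Suc[of j] len_bounds(3)[of j] assms(1) by (simp add: Suc_diff_le)
qed simp

lemma L_strict_block:
  assumes "i \<in> {1..n1}" "i < j" "L j < c"
  shows "L i + len i < c"
  using L_mono[of "Suc i" j] L_Suc[of i] assms by auto

lemma blk_eq:
  assumes "i \<in> {1..n1}" "L i < c" "c \<le> L i + len i"
  shows "bk c = i"
  unfolding blk_def
proof (rule the_equality)
  fix j assume j: "j \<in> {1..n1} \<and> L j < c \<and> c \<le> L j + len j"
  show "j = i"
    using L_strict_block[of i j c] L_strict_block[of j i c] assms j by (cases i j rule: linorder_cases) auto
qed (use assms in blast)

lemma blk_props:
  assumes "c \<in> {1..n3}"
  shows "bk c \<in> {1..n1}" "L (bk c) < c" "c \<le> L (bk c) + len (bk c)"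
proof -
  define J where "J = {j \<in> {1..n1}. L j < c}"
  define i where "i = Max J"
  have fin: "finite J" and "1 \<in> J"
    using assms n1_ge L_one by (auto simp: J_def)
  then have i: "i \<in> {1..n1}" "L i < c" and i_max: "\<And>j. j \<in> J \<Longrightarrow> j \<le> i"
    using Max_in[OF fin] Max_ge[OF fin] unfolding i_def J_def by blast+
  have "c \<le> L i + len i"
  proof (cases "i = n1")
    case True
    then show ?thesis using L_end L_Suc[of i] i assms by simp
  next
    case False
    then have "Suc i \<notin> J"
      using i_max[of "Suc i"] by auto
    then show ?thesis using i False L_Suc[of i] by (auto simp: J_def)
  qed
  then have "bk c = i"
    using i by (intro blk_eq) auto
  then show "bk c \<in> {1..n1}" "L (bk c) < c" "c \<le> L (bk c) + len (bk c)"
    using i \<open>c \<le> L i + len i\<close> by auto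
qed

lemma block_mem:
  assumes "i \<in> {1..n1}" "L i < c" "c \<le> L i + len i"
  shows "c \<in> {1..n3}" "bk c = i"
proof -
  have "L i + len i \<le> n3"
    using L_mono[of "Suc i" "Suc n1"] L_end L_Suc[of i] assms(1) by auto
  then show "c \<in> {1..n3}"
    using assms(2,3) by auto
  show "bk c = i"
    using blk_eq[OF assms] .
qed

lemma block_eq_interval:
  assumes "i \<in> {1..n1}"
  shows "{c \<in> {1..n3}. bk c = i} = {L i + 1..L i + len i}"
proof
  show "{c \<in> {1..n3}. bk c = i} \<subseteq> {L i + 1..L i + len i}"
    using blk_props(2,3) by fastforce
  show "{L i + 1..L i + len i} \<subseteq> {c \<in> {1..n3}. bk c = i}"
    using block_mem[OF assms] by auto
qed

lemma card_block:
  assumes "i \<in> {1..n1}"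
  shows "card {c \<in> {1..n3}. bk c = i} = len i"
  unfolding block_eq_interval[OF assms] by simp

lemma block_start:
  assumes "i \<in> {1..n1}"
  shows "sblk n1 n3 i \<in> {1..n3}" "bk (sblk n1 n3 i) = i"
  using block_mem[OF assms, of "L i + 1"] len_bounds(3)[of i] unfolding sblk_def by auto

lemma block_second:
  assumes "i \<in> {1..n1}" "2 \<le> len i"
  shows "sblk n1 n3 i + 1 \<in> {1..n3}" "bk (sblk n1 n3 i + 1) = i"
  using block_mem[OF assms(1), of "L i + 2"] assms(2) unfolding sblk_def by auto

lemma same_block_dist:
  assumes "c \<in> {1..n3}" "c' \<in> {1..n3}" "bk c = bk c'" "c \<le> c'"
  shows "c' - c < len (bk c)"
  using blk_props[OF assms(1)] blk_props[OF assms(2)] assms(3,4) by auto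

lemma three_n1_le: "3 * n1 \<le> 2 * n3"
  using three_max_le by simp

lemma three_n2_le: "3 * n2 \<le> 2 * n3"
  using three_max_le by simp

lemma len_first: "2 \<le> len 1"
proof (cases "r = 0")
  case True
  then have "3 * n1 \<le> (2 * q) * n1"
    using three_n1_le n3_eq by linarith
  then have "3 \<le> 2 * q"
    using n1_ge mult_le_cancel2[of 3 n1 "2 * q"] by simp
  then show ?thesis
    using len_bounds(1)[of 1] by linarith
next
  case False
  then show ?thesis
    using r_less q_pos by (simp add: len_eq)
qed

lemma blk_one_two: "bk 1 = 1" "bk 2 = 1"
  using blk_eq[of 1] len_first L_one n1_ge by auto

lemma len_odd_long:
  assumes "n1 \<le> 2 * r" "odd i" "i \<le> n1"
  shows "len i = Suc q"
  using assms by (auto simp: len_eq)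

lemma len_pair:
  assumes "a \<in> {1..n1}" "p \<in> {1..n1}" "cyc_succ n1 p = a"
  shows "3 \<le> len a + len p"
proof (cases "2 \<le> q")
  case True
  then show ?thesis
    using len_bounds(1)[of a] len_bounds(1)[of p] by linarith
next
  case False
  then have q1: "q = 1"
    using q_pos by linarith
  then have r: "n1 \<le> 2 * r"
    using three_n1_le n3_eq by simp
  have "len a = Suc q \<or> len p = Suc q"
  proof (cases "odd a")
    case True
    then show ?thesis using len_odd_long[OF r] assms(1) by simp
  next
    case False
    then have "a \<noteq> 1" by auto
    then have "p = a - 1" "a \<ge> 2"
      using assms by (auto simp: cyc_succ_def split: if_splits)
    then show ?thesis using len_odd_long[OF r, of p] False assms(2) by simp
  qed
  then show ?thesis
    using len_bounds(1)[of a] len_bounds(1)[of p] q1 by linarith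
qed

lemma fst_card:
  assumes "a \<in> {1..n1}"
  shows "3 \<le> card {c \<in> {1..n3}. bk c = a \<or> cyc_succ n1 (bk c) = a}"
proof -
  obtain p where p: "p \<in> {1..n1}" "cyc_succ n1 p = a"
    using cyc_succ_surj[OF assms] by blast
  have "p \<noteq> a"
    using p cyc_succ_neq[of n1 p] n1_ge by auto
  have "cyc_succ n1 (bk c) = a \<longleftrightarrow> bk c = p" if "c \<in> {1..n3}" for c
    using inj_on_eq_iff[OF inj_on_cyc_succ blk_props(1)[OF that] p(1)] p(2) by simp
  then have "{c \<in> {1..n3}. bk c = a \<or> cyc_succ n1 (bk c) = a}
      = {c \<in> {1..n3}. bk c = a} \<union> {c \<in> {1..n3}. bk c = p}"
    by auto
  moreover have "card ({c \<in> {1..n3}. bk c = a} \<union> {c \<in> {1..n3}. bk c = p}) = len a + len p"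
    using card_block[OF assms] card_block[OF p(1)] \<open>p \<noteq> a\<close> by (subst card_Un_disjoint) auto
  ultimately show ?thesis
    using len_pair[OF assms p] by simp
qed

lemma two_q_le: "2 * q \<le> n2"
proof -
  have "(2 * q) * n1 \<le> n2 * n1"
    using le_prod n3_eq mult.commute[of n1 n2] by linarith
  then show ?thesis
    using n1_ge mult_le_cancel2[of "2 * q" n1 n2] by simp
qed

lemma two_q_less: "0 < r \<Longrightarrow> 2 * q < n2"
proof -
  assume "0 < r"
  then have "(2 * q) * n1 < n2 * n1"
    using le_prod n3_eq mult.commute[of n1 n2] by linarith
  then show ?thesis
    using mult_less_cancel2[of "2 * q" n1 n2] by simp
qed

lemma long_imp_r_pos:
  assumes "len i = Suc q"
  shows "0 < r"
proof (rule ccontr)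
  assume "\<not> 0 < r"
  then have "len i = q"
    by (cases i) (auto simp: len_eq)
  then show False
    using assms by simp
qed

definition h where "h = n2 div 2"

lemma len_le_h: "even n2 \<Longrightarrow> len i \<le> h"
  using len_bounds(1,2)[of i] two_q_le two_q_less[OF long_imp_r_pos, of i] by (auto simp: h_def le_Suc_eq)

definition f where "f = (n2 - 1) div 2"

lemma n2_odd_eq: "odd n2 \<Longrightarrow> n2 = 2 * f + 1"
  unfolding f_def by presburger

lemma f_pos: "odd n2 \<Longrightarrow> 1 \<le> f"
  using n2_ge n2_odd_eq by linarith

lemma len_le_Suc_f: "odd n2 \<Longrightarrow> len i \<le> Suc f"
  using len_bounds(2)[of i] two_q_le n2_odd_eq by linarith

lemma three_f_le: "odd n2 \<Longrightarrow> 3 * f + 2 \<le> n3"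
  using three_max_le n2_odd_eq by simp

lemma long_block:
  assumes "odd n2" "f < len i"
  shows "q = f" "len i = Suc q" "2 * r \<le> n1" "odd i" "i \<le> 2 * r"
proof -
  show qf: "q = f" and l: "len i = Suc q"
    using len_bounds(2)[of i] two_q_le n2_odd_eq[OF assms(1)] assms(2) by linarith+
  have "2 * n3 = 2 * (f * n1) + 2 * r"
    using n3_eq qf by simp
  moreover have "n1 * n2 = 2 * (f * n1) + n1"
    by (subst n2_odd_eq[OF assms(1)]) (simp add: algebra_simps)
  ultimately show r: "2 * r \<le> n1"
    using le_prod by linarith
  then show "odd i" "i \<le> 2 * r"
    using l len_eq[of i] by (auto split: if_splits)
qed

lemma long_block_first: "odd n2 \<Longrightarrow> f < len i \<Longrightarrow> f < len 1"
  using long_block[of i] long_imp_r_pos[of i] by (auto simp: len_eq)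

lemma long_blocks_not_adjacent:
  assumes "odd n2" "i \<in> {1..n1}" "f < len i" "f < len j"
  shows "j \<noteq> cyc_succ n1 i"
proof
  assume j: "j = cyc_succ n1 i"
  have "odd i" "odd j" "i \<le> 2 * r" "2 * r \<le> n1"
    using long_block[OF assms(1,3)] long_block[OF assms(1,4)] by auto
  then show False
    using j assms(2) by (cases "i = n1") (auto simp: cyc_succ_def, presburger)
qed

lemma kcnt_eq: "kcnt n1 n2 n3 = card {i \<in> {1..n1}. f < len i}"
  by (simp add: kcnt_def f_def)

lemma kcnt_le: 
  assumes "odd n2" "2 \<le> kcnt n1 n2 n3"
  shows "3 * f + kcnt n1 n2 n3 \<le> n3"
proof -
  obtain i where "f < len i"
    using assms(2) by (fastforce simp: kcnt_eq)
  then have q: "q = f"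
    using long_block[OF assms(1)] by blast
  have "f < len i \<longleftrightarrow> len i = Suc q" for i
    using len_bounds(1,2)[of i] q by linarith
  then have "{i \<in> {1..n1}. f < len i} = {i \<in> {1..n1}. len i = Suc q}"
    by simp
  then have "kcnt n1 n2 n3 = r"
    using card_long_blocks by (simp add: kcnt_eq)
  moreover have "3 * f \<le> f * n1"
    using mult_le_mono1[OF n1_ge, of f] by (simp add: mult.commute)
  moreover have "n3 = f * n1 + r"
    using n3_eq q by simp
  ultimately show ?thesis
    by linarith
qed

end

section \<open>Ranks among the columns outside a set\<close>

lemma rank_out_Suc: "rank_out A (Suc c) = rank_out A c + (if Suc c \<in> A then 0 else 1)"
proof -
  have "{c' \<in> {1..Suc c}. c' \<notin> A} =
      (if Suc c \<in> A then {c' \<in> {1..c}. c' \<notin> A} else insert (Suc c) {c' \<in> {1..c}. c' \<notin> A})"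
    by (auto simp: le_Suc_eq)
  then show ?thesis
    by (simp add: rank_out_def)
qed

lemma rank_out_mono:
  assumes "c \<le> c'"
  shows "rank_out A c \<le> rank_out A c'" "rank_out A c' \<le> rank_out A c + (c' - c)"
  using assms
  by (induction c' rule: dec_induct) (auto simp: rank_out_Suc Suc_diff_le)

lemma rank_out_strict: "c < c' \<Longrightarrow> c' \<notin> A \<Longrightarrow> rank_out A c < rank_out A c'"
  using rank_out_mono(1)[of c "c' - 1" A] rank_out_Suc[of A "c' - 1"] by (cases c') auto

lemma rank_out_pos: "1 \<le> c \<Longrightarrow> c \<notin> A \<Longrightarrow> 1 \<le> rank_out A c"
  using rank_out_strict[of "c - 1" c A] by simp

lemma rank_out_skip:
  assumes "c < d" "d \<le> c'" "d \<in> A"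
  shows "rank_out A c' + 1 \<le> rank_out A c + (c' - c)"
proof -
  have "rank_out A (d - 1) \<le> rank_out A c + (d - 1 - c)" "rank_out A c' \<le> rank_out A d + (c' - d)"
    using rank_out_mono(2)[of c "d - 1" A] rank_out_mono(2)[of d c' A] assms by auto
  moreover have "rank_out A d = rank_out A (d - 1)"
    using rank_out_Suc[of A "d - 1"] assms by (cases d) auto
  ultimately show ?thesis
    using assms by linarith
qed

lemma rank_out_surj: "1 \<le> t \<Longrightarrow> t \<le> rank_out A n \<Longrightarrow> \<exists>c\<in>{1..n}. c \<notin> A \<and> rank_out A c = t"
proof (induction n)
  case (Suc n)
  show ?case
  proof (cases "t \<le> rank_out A n")
    case True
    then show ?thesis using Suc by fastforce
  next
    case False
    then show ?thesis
      using Suc.prems by (intro bexI[of _ "Suc n"]) (auto simp: rank_out_Suc split: if_splits)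
  qed
qed (simp add: rank_out_def)

lemma rank_out_bij: "bij_betw (rank_out A) ({1..n} - A) {1..rank_out A n}"
proof (rule bij_betw_imageI)
  show "inj_on (rank_out A) ({1..n} - A)"
  proof (rule inj_onI)
    fix c c' assume "c \<in> {1..n} - A" "c' \<in> {1..n} - A" "rank_out A c = rank_out A c'"
    then show "c = c'"
      using rank_out_strict[of c c' A] rank_out_strict[of c' c A] by (cases c c' rule: linorder_cases) auto
  qed
  show "rank_out A ` ({1..n} - A) = {1..rank_out A n}"
    using rank_out_pos rank_out_mono(1) rank_out_surj[of _ A n] by fastforce
qed

lemma card_rank_out_preimage:
  assumes "X \<subseteq> {1..rank_out A n}"
  shows "card {c \<in> {1..n} - A. rank_out A c \<in> X} = card X"
proof -
  have "rank_out A ` {c \<in> {1..n} - A. rank_out A c \<in> X} = X"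
  proof
    show "X \<subseteq> rank_out A ` {c \<in> {1..n} - A. rank_out A c \<in> X}"
    proof
      fix t assume "t \<in> X"
      then obtain c where "c \<in> {1..n} - A" "rank_out A c = t"
        using assms bij_betw_imp_surj_on[OF rank_out_bij, of A n] by (metis imageE subsetD)
      then show "t \<in> rank_out A ` {c \<in> {1..n} - A. rank_out A c \<in> X}"
        using \<open>t \<in> X\<close> by blast
    qed
  qed blast
  moreover have "inj_on (rank_out A) {c \<in> {1..n} - A. rank_out A c \<in> X}"
    using bij_betw_imp_inj_on[OF rank_out_bij, of A n] by (rule inj_on_subset) auto
  ultimately show ?thesis
    using card_image by fastforce
qed

lemma rank_out_ge: "finite A \<Longrightarrow> n - card A \<le> rank_out A n"
proof -
  assume "finite A"
  then have "card {1..n} - card A \<le> card ({1..n} - A)"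
    by (rule diff_card_le_card_Diff)
  moreover have "{c' \<in> {1..n}. c' \<notin> A} = {1..n} - A"
    by auto
  ultimately show ?thesis
    by (simp add: rank_out_def)
qed

lemma mod_eq_imp_eq_close:
  assumes "(x::nat) \<le> y" "y - x < m" "x mod m = y mod m"
  shows "x = y"
proof -
  have "m dvd y - x"
    using mod_eq_dvd_iff_nat[OF assms(1), of m] assms(3) by simp
  then show ?thesis
    using assms(1,2) by (metis diff_is_0_eq' dvd_imp_le le_antisym not_less zero_less_diff)
qed

lemma mod_add_mult_pred: "1 \<le> v \<Longrightarrow> v \<le> (m::nat) \<Longrightarrow> (v + k * m - 1) mod m = v - 1"
  by (metis Nat.add_diff_assoc2 less_Suc_eq_le mod_less mod_mult_self1 Suc_diff_le diff_Suc_1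
      le_add_diff_inverse2 less_imp_diff_less nat_less_le)

lemma card_rank_out_level:
  assumes "1 \<le> v" "v \<le> f" "v + (m - 1) * f \<le> rank_out A n"
  shows "m \<le> card {c \<in> {1..n} - A. (rank_out A c - 1) mod f + 1 = v}"
proof -
  define X where "X = (\<lambda>j. v + j * f) ` {..<m}"
  have "inj_on (\<lambda>j. v + j * f) {..<m}"
    using assms(1,2) by (intro inj_onI) simp
  then have "card X = m"
    by (simp add: X_def card_image)
  moreover have "X \<subseteq> {1..rank_out A n}"
  proof
    fix t assume "t \<in> X"
    then obtain j where j: "j < m" "t = v + j * f"
      by (auto simp: X_def)
    then have "j * f \<le> (m - 1) * f"
      by (intro mult_le_mono1) linarith
    then have "t \<le> rank_out A n"
      using j(2) assms(3) by linarith
    then show "t \<in> {1..rank_out A n}"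
      using j(2) assms(1) by simp
  qed
  moreover have "{c \<in> {1..n} - A. rank_out A c \<in> X}
      \<subseteq> {c \<in> {1..n} - A. (rank_out A c - 1) mod f + 1 = v}"
    using mod_add_mult_pred[OF assms(1,2)] assms(1) by (auto simp: X_def)
  then have "card {c \<in> {1..n} - A. rank_out A c \<in> X}
      \<le> card {c \<in> {1..n} - A. (rank_out A c - 1) mod f + 1 = v}"
    by (rule card_mono[rotated]) simp
  ultimately show ?thesis
    using card_rank_out_preimage[of X A n] by simp
qed

lemma mod_pred_neq:
  assumes "1 \<le> (t::nat)" "t < t'" "t' - t < f"
  shows "(t - 1) mod f \<noteq> (t' - 1) mod f"
proof
  assume "(t - 1) mod f = (t' - 1) mod f"
  moreover have "t - 1 \<le> t' - 1" "(t' - 1) - (t - 1) < f"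
    using assms by arith+
  ultimately have "t - 1 = t' - 1"
    by (rule mod_eq_imp_eq_close[rotated 2])
  then show False
    using assms by arith
qed

lemma inj_on_pair_of_less:
  fixes g :: "nat \<Rightarrow> 'a"
  assumes "\<And>c c'. c \<in> A \<Longrightarrow> c' \<in> A \<Longrightarrow> B c = B c' \<Longrightarrow> c < c' \<Longrightarrow> g c \<noteq> g c'"
  shows "inj_on (\<lambda>c. (B c, g c)) A"
proof (rule inj_onI)
  fix c c' assume "c \<in> A" "c' \<in> A" "(B c, g c) = (B c', g c')"
  then show "c = c'"
    using assms[of c c'] assms[of c' c] by (cases c c' rule: linorder_cases) auto
qed

lemma inj_on_pair_fun_upd:
  assumes "inj_on (\<lambda>c. (B c, g c)) A" "\<And>c. c \<in> A \<Longrightarrow> c \<noteq> z \<Longrightarrow> B c = B z \<Longrightarrow> g c \<noteq> v"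
  shows "inj_on (\<lambda>c. (B c, (g(z := v)) c)) A"
proof (rule inj_onI)
  fix c c' assume c: "c \<in> A" "c' \<in> A" and eq: "(B c, (g(z := v)) c) = (B c', (g(z := v)) c')"
  show "c = c'"
  proof (cases "c = z \<or> c' = z")
    case True
    then show ?thesis
      using assms(2) c eq by (auto split: if_splits)
  next
    case False
    then show ?thesis
      using eq by (intro inj_onD[OF assms(1) _ c]) auto
  qed
qed

section \<open>Heights of the Middle Cone landmarks\<close>

context middle_cone_params
begin

subsection \<open>Even \<open>n2\<close>\<close>

lemma inj_on_block_mod:
  assumes "\<And>i. len i \<le> m"
  shows "inj_on (\<lambda>c. (bk c, (c - 1) mod m)) {1..n3}"
proof (rule inj_on_pair_of_less)
  fix c c' assume c: "c \<in> {1..n3}" "c' \<in> {1..n3}" "bk c = bk c'" "c < c'"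
  have "c' - c < m"
    using same_block_dist[OF c(1-3) less_imp_le[OF c(4)]] assms[of "bk c"] by linarith
  then show "(c - 1) mod m \<noteq> (c' - 1) mod m"
    using mod_pred_neq[OF _ c(4)] c(1) by simp
qed

lemma even_heights:
  assumes "even n2"
  shows "yL n1 n2 n3 c = (c - 1) mod h + 1" "yR n1 n2 n3 c = h + (c - 1) mod h + 1"
  using assms by (simp_all add: yL_def yR_def h_def)

lemma column_system_even:
  assumes "even n2"
  shows "column_system n1 n2 n3 bk (yL n1 n2 n3) (yR n1 n2 n3)"
proof
  have h: "2 \<le> h" "n2 = 2 * h"
    using assms n2_ge by (auto simp: h_def)
  have lt: "(c - 1) mod h + 1 \<le> h" for c
    using h(1) by (simp add: Suc_le_eq)
  have inj: "inj_on (\<lambda>c. (bk c, (c - 1) mod h)) {1..n3}"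
    using inj_on_block_mod len_le_h[OF assms] by blast
  show "2 \<le> n1" "\<And>c. c \<in> {1..n3} \<Longrightarrow> bk c \<in> {1..n1}"
    using n1_ge blk_props(1) by auto
  show "yL n1 n2 n3 c \<in> {1..n2}" "yR n1 n2 n3 c \<in> {1..n2}" "yL n1 n2 n3 c \<noteq> yR n1 n2 n3 c" for c
    using lt[of c] h(2) by (simp_all add: even_heights[OF assms])
  show "yL n1 n2 n3 c = yR n1 n2 n3 c' \<Longrightarrow> bk c \<noteq> cyc_succ n1 (bk c') \<and> bk c' \<noteq> cyc_succ n1 (bk c)"
    for c c'
    using lt[of c] by (simp add: even_heights[OF assms])
  show "inj_on (\<lambda>c. (bk c, yL n1 n2 n3 c)) {1..n3}" "inj_on (\<lambda>c. (bk c, yR n1 n2 n3 c)) {1..n3}"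
    by (rule inj_onI, erule (1) inj_onD[OF inj, rotated], simp add: even_heights[OF assms])+
qed

lemma snd_card_even:
  assumes "even n2" "b \<in> {1..n2}"
  shows "3 \<le> card {c \<in> {1..n3}. yL n1 n2 n3 c = b \<or> yR n1 n2 n3 c = b}"
proof -
  have h: "2 \<le> h" "n2 = 2 * h" "3 * h \<le> n3"
    using assms n2_ge three_n2_le by (auto simp: h_def)
  define v where "v = (b - 1) mod h + 1"
  have v: "1 \<le> v" "v \<le> h" "b = v \<or> b = h + v"
  proof -
    show "1 \<le> v" "v \<le> h"
      using h(1) by (simp_all add: v_def Suc_le_eq)
    show "b = v \<or> b = h + v"
      using assms(2) h(2) by (cases "b \<le> h") (auto simp: v_def le_mod_geq)
  qed
  have mem: "v + k * h \<in> {c \<in> {1..n3}. yL n1 n2 n3 c = b \<or> yR n1 n2 n3 c = b}" if "k \<le> 2" for k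
  proof -
    have "k * h \<le> 2 * h"
      using that by simp
    moreover have "yL n1 n2 n3 (v + k * h) = v" "yR n1 n2 n3 (v + k * h) = h + v"
      using even_heights[OF assms(1)] mod_add_mult_pred[OF v(1,2)] v(1) by simp_all
    ultimately show ?thesis
      using v h by auto
  qed
  have "{v, v + h, v + 2 * h} \<subseteq> {c \<in> {1..n3}. yL n1 n2 n3 c = b \<or> yR n1 n2 n3 c = b}"
    using mem[of 0] mem[of 1] mem[of 2] by (simp only: mult_1 mult_0 add_0_right insert_subset) simp
  from card_mono[OF _ this] show ?thesis
    using h(1) by simp
qed


subsection \<open>Odd \<open>n2\<close>\<close>

abbreviation "S \<equiv> Sset n1 n2 n3"
abbreviation "S1 \<equiv> (\<lambda>s. s + 1) ` S"
abbreviation "k \<equiv> kcnt n1 n2 n3"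

lemma Sset_many: "2 \<le> k \<Longrightarrow> S = sblk n1 n3 ` {i \<in> {1..n1}. f < len i}"
  unfolding Sset_def f_def by auto

lemma Sset_few: "\<not> 2 \<le> k \<Longrightarrow> S = {1}"
  unfolding Sset_def by simp

lemma finite_Sset: "finite S"
  by (cases "2 \<le> k") (simp_all add: Sset_many Sset_few)

lemma sblk_one: "sblk n1 n3 1 = 1"
  using L_one by (simp add: sblk_def)

lemma long_block_one:
  assumes "odd n2" "\<not> 2 \<le> k" "i \<in> {1..n1}" "f < len i"
  shows "i = 1"
proof (rule ccontr)
  assume "i \<noteq> 1"
  have "{1, i} \<subseteq> {i \<in> {1..n1}. f < len i}"
    using assms(3,4) long_block_first[OF assms(1,4)] n1_ge by auto
  then have "card {1, i} \<le> k"
    unfolding kcnt_eq by (intro card_mono) auto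
  then show False
    using \<open>i \<noteq> 1\<close> assms(2) by simp
qed

lemma long_start_mem_Sset:
  assumes "odd n2" "i \<in> {1..n1}" "f < len i"
  shows "sblk n1 n3 i \<in> S"
proof (cases "2 \<le> k")
  case True
  then show ?thesis using assms(2,3) by (simp add: Sset_many)
next
  case False
  then show ?thesis using long_block_one[OF assms(1) False assms(2,3)] sblk_one by (simp add: Sset_few)
qed

lemma mem_Sset:
  assumes "odd n2" "c \<in> S"
  shows "c \<in> {1..n3}" "c = sblk n1 n3 (bk c)" "2 \<le> len (bk c)" "2 \<le> k \<Longrightarrow> f < len (bk c)"
proof -
  have "c \<in> {1..n3} \<and> c = sblk n1 n3 (bk c) \<and> 2 \<le> len (bk c) \<and> (2 \<le> k \<longrightarrow> f < len (bk c))"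
  proof (cases "2 \<le> k")
    case True
    then obtain i where i: "i \<in> {1..n1}" "f < len i" "c = sblk n1 n3 i"
      using assms(2) by (auto simp: Sset_many)
    then show ?thesis
      using block_start[OF i(1)] f_pos[OF assms(1)] by auto
  next
    case False
    then show ?thesis
      using assms(2) blk_one_two sblk_one len_first n1_le n1_ge by (auto simp: Sset_few)
  qed
  then show "c \<in> {1..n3}" "c = sblk n1 n3 (bk c)" "2 \<le> len (bk c)" "2 \<le> k \<Longrightarrow> f < len (bk c)"
    by auto
qed

lemma mem_Sset_succ:
  assumes "odd n2" "c \<in> S1"
  shows "c \<in> {1..n3}" "c - 1 \<in> S" "bk c = bk (c - 1)"
proof -
  obtain s where s: "s \<in> S" "c = s + 1"
    using assms(2) by blast
  then show "c - 1 \<in> S"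
    by simp
  have "bk s \<in> {1..n1}"
    using blk_props(1) mem_Sset(1)[OF assms(1) s(1)] .
  then show "c \<in> {1..n3}" "bk c = bk (c - 1)"
    using block_second[of "bk s"] mem_Sset(2,3)[OF assms(1) s(1)] s(2) by auto
qed

lemma Sset_block_unique:
  assumes "odd n2" "c \<in> S" "c' \<in> S" "bk c = bk c'"
  shows "c = c'"
  using mem_Sset(2)[OF assms(1,2)] mem_Sset(2)[OF assms(1,3)] assms(4) by simp

lemma card_Sset_le: "odd n2 \<Longrightarrow> card S + 3 * f \<le> n3"
proof (cases "2 \<le> k")
  case True
  have "card S \<le> card {i \<in> {1..n1}. f < len i}"
    unfolding Sset_many[OF True] by (rule card_image_le) simp
  then show "card S + 3 * f \<le> n3" if "odd n2"
    using kcnt_le[OF that True] kcnt_eq by simp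
next
  case False
  then show "card S + 3 * f \<le> n3" if "odd n2"
    using three_f_le[OF that] by (simp add: Sset_few)
qed

lemma rank_out_Sset_ge: "odd n2 \<Longrightarrow> 3 * f \<le> rank_out S n3"
  using rank_out_ge[OF finite_Sset, of n3] card_Sset_le by simp

lemma rank_out_Sset_succ_ge: "odd n2 \<Longrightarrow> 3 * f \<le> rank_out S1 n3"
  using rank_out_ge[OF finite_imageI[OF finite_Sset, of "\<lambda>s. s + 1"], of n3]
    card_image_le[OF finite_Sset, of "\<lambda>s. s + 1"] card_Sset_le by simp

lemma odd_heights:
  assumes "odd n2"
  shows "yL n1 n2 n3 c = (if c \<in> S then n2 else (rank_out S c - 1) mod f + 1)"
    "yR n1 n2 n3 c = (if c \<in> S1 then n2 else f + (rank_out S1 c - 1) mod f + 1)"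
  using assms by (simp_all add: yL_def yR_def f_def)

lemma yL_low: "odd n2 \<Longrightarrow> c \<notin> S \<Longrightarrow> 1 \<le> yL n1 n2 n3 c \<and> yL n1 n2 n3 c \<le> f"
  using f_pos by (simp add: odd_heights Suc_le_eq)

lemma yR_mid: "odd n2 \<Longrightarrow> c \<notin> S1 \<Longrightarrow> f < yR n1 n2 n3 c \<and> yR n1 n2 n3 c \<le> 2 * f"
  using f_pos by (simp add: odd_heights Suc_le_eq)

lemma yL_range: "odd n2 \<Longrightarrow> yL n1 n2 n3 c \<in> {1..n2}"
  using yL_low[of c] n2_odd_eq by (cases "c \<in> S") (auto simp: odd_heights)

lemma yR_range: "odd n2 \<Longrightarrow> yR n1 n2 n3 c \<in> {1..n2}"
  using yR_mid[of c] n2_odd_eq f_pos by (cases "c \<in> S1") (auto simp: odd_heights)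

lemma yL_eq_yR:
  assumes "odd n2" "yL n1 n2 n3 c = yR n1 n2 n3 c'"
  shows "c \<in> S" "c' \<in> S1"
  using assms yL_low[OF assms(1), of c] yR_mid[OF assms(1), of c'] n2_odd_eq[OF assms(1)]
  by (auto simp: odd_heights split: if_splits)

lemma block_gap:
  assumes "odd n2" "c \<in> {1..n3}" "c' \<in> {1..n3}" "bk c = bk c'" "c < c'"
  shows "c' - c < f \<or> (c' - c = f \<and> c \<in> S)"
proof (cases "c' - c < f")
  case False
  moreover have "c' - c < len (bk c)" "len (bk c) \<le> Suc f"
    using same_block_dist[OF assms(2-4)] assms(5) len_le_Suc_f[OF assms(1)] by auto
  ultimately have gap: "c' - c = f" and long: "len (bk c) = Suc f"
    by linarith+
  have "L (bk c) < c" "c' \<le> L (bk c) + len (bk c)"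
    using blk_props(2)[OF assms(2)] blk_props(3)[OF assms(3)] assms(4) by auto
  then have "c = sblk n1 n3 (bk c)"
    using gap long assms(5) by (simp add: sblk_def)
  then show ?thesis
    using gap long long_start_mem_Sset[OF assms(1) blk_props(1)[OF assms(2)]] by simp
qed simp

lemma yL_neq_same_block:
  assumes "odd n2" "c \<in> {1..n3}" "c' \<in> {1..n3}" "bk c = bk c'" "c < c'"
  shows "yL n1 n2 n3 c \<noteq> yL n1 n2 n3 c'"
proof (cases "c \<in> S \<or> c' \<in> S")
  case True
  then have "(c \<in> S) \<noteq> (c' \<in> S)"
    using Sset_block_unique[OF assms(1) _ _ assms(4)] assms(5) by auto
  then show ?thesis
    using yL_low[OF assms(1), of c] yL_low[OF assms(1), of c'] n2_odd_eq[OF assms(1)]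
    by (auto simp: odd_heights[OF assms(1)])
next
  case False
  then have "c' - c < f"
    using block_gap[OF assms] by auto
  then have "rank_out S c' - rank_out S c < f"
    using rank_out_mono(2)[of c c' S] assms(5) by linarith
  then show ?thesis
    using mod_pred_neq[OF rank_out_pos rank_out_strict[OF assms(5)]] assms(2) False
    by (auto simp: odd_heights[OF assms(1)])
qed

lemma yR_neq_same_block:
  assumes "odd n2" "c \<in> {1..n3}" "c' \<in> {1..n3}" "bk c = bk c'" "c < c'"
  shows "yR n1 n2 n3 c \<noteq> yR n1 n2 n3 c'"
proof (cases "c \<in> S1 \<or> c' \<in> S1")
  case True
  have "c - 1 \<noteq> c' - 1"
    using assms(2,5) by auto
  then have "(c \<in> S1) \<noteq> (c' \<in> S1)"
    using True Sset_block_unique[OF assms(1), of "c - 1" "c' - 1"] mem_Sset_succ[OF assms(1)] assms(4)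
    by auto
  then show ?thesis
    using yR_mid[OF assms(1), of c] yR_mid[OF assms(1), of c'] n2_odd_eq[OF assms(1)]
    by (auto simp: odd_heights[OF assms(1)])
next
  case False
  have "rank_out S1 c' - rank_out S1 c < f"
    using block_gap[OF assms]
  proof
    assume "c' - c < f"
    then show ?thesis
      using rank_out_mono(2)[of c c' S1] assms(5) by linarith
  next
    assume gap: "c' - c = f \<and> c \<in> S"
    then have "rank_out S1 c' + 1 \<le> rank_out S1 c + (c' - c)"
      using f_pos[OF assms(1)] by (intro rank_out_skip[of c "c + 1"]) auto
    then show ?thesis
      using gap f_pos[OF assms(1)] by linarith
  qed
  then show ?thesis
    using mod_pred_neq[OF rank_out_pos rank_out_strict[OF assms(5)]] assms(2) False
    by (auto simp: odd_heights[OF assms(1)])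
qed

lemma inj_yL_odd: "odd n2 \<Longrightarrow> inj_on (\<lambda>c. (bk c, yL n1 n2 n3 c)) {1..n3}"
  by (intro inj_on_pair_of_less yL_neq_same_block)

lemma inj_yR_odd: "odd n2 \<Longrightarrow> inj_on (\<lambda>c. (bk c, yR n1 n2 n3 c)) {1..n3}"
  by (intro inj_on_pair_of_less yR_neq_same_block)

lemma card_yL_level:
  assumes "odd n2" "1 \<le> v" "v \<le> f" "v + (m - 1) * f \<le> rank_out S n3"
  shows "m \<le> card {c \<in> {1..n3}. yL n1 n2 n3 c = v}"
proof -
  have "{c \<in> {1..n3} - S. (rank_out S c - 1) mod f + 1 = v} \<subseteq> {c \<in> {1..n3}. yL n1 n2 n3 c = v}"
    by (auto simp: odd_heights[OF assms(1)])
  then show ?thesis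
    using card_rank_out_level[OF assms(2-4)] card_mono[OF _ \<open>_ \<subseteq> _\<close>] by fastforce
qed

lemma card_yR_level:
  assumes "odd n2" "1 \<le> v" "v \<le> f" "v + (m - 1) * f \<le> rank_out S1 n3"
  shows "m \<le> card {c \<in> {1..n3}. yR n1 n2 n3 c = f + v}"
proof -
  have "{c \<in> {1..n3} - S1. (rank_out S1 c - 1) mod f + 1 = v} \<subseteq> {c \<in> {1..n3}. yR n1 n2 n3 c = f + v}"
    by (auto simp: odd_heights[OF assms(1)])
  then show ?thesis
    using card_rank_out_level[OF assms(2-4)] card_mono[OF _ \<open>_ \<subseteq> _\<close>] by fastforce
qed


lemma card_yL_low_level:
  assumes "odd n2" "1 \<le> b" "b \<le> f"
  shows "3 \<le> card {c \<in> {1..n3}. yL n1 n2 n3 c = b}"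
  using card_yL_level[OF assms, of 3] rank_out_Sset_ge[OF assms(1)] assms(3) by simp

lemma card_yR_mid_level:
  assumes "odd n2" "f < b" "b \<le> 2 * f"
  shows "3 \<le> card {c \<in> {1..n3}. yR n1 n2 n3 c = b}"
  using card_yR_level[OF assms(1), of "b - f" 3] rank_out_Sset_succ_ge[OF assms(1)] assms(2,3) by simp

lemma card_level_disj:
  assumes "3 \<le> card {c \<in> {1..n3}. P c}"
  shows "3 \<le> card {c \<in> {1..n3}. P c \<or> Q c}" "3 \<le> card {c \<in> {1..n3}. Q c \<or> P c}"
  by (rule le_trans[OF assms card_mono]; auto)+

lemma card_three_columns:
  assumes "{c1, c2, c3} \<subseteq> {c \<in> {1..n3}. P c}" "c1 \<noteq> c2" "c1 \<noteq> c3" "c2 \<noteq> c3"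
  shows "3 \<le> card {c \<in> {1..n3}. P c}"
  using card_mono[OF _ assms(1)] assms(2-4) by simp

lemma column_system_odd_many:
  assumes "odd n2" "2 \<le> k"
  shows "column_system n1 n2 n3 bk (yL n1 n2 n3) (yR n1 n2 n3)"
proof
  show "2 \<le> n1" "\<And>c. c \<in> {1..n3} \<Longrightarrow> bk c \<in> {1..n1}"
    using n1_ge blk_props(1) by auto
  show "yL n1 n2 n3 c \<in> {1..n2}" "yR n1 n2 n3 c \<in> {1..n2}" for c
    using yL_range[OF assms(1)] yR_range[OF assms(1)] by auto
  show "inj_on (\<lambda>c. (bk c, yL n1 n2 n3 c)) {1..n3}" "inj_on (\<lambda>c. (bk c, yR n1 n2 n3 c)) {1..n3}"
    using inj_yL_odd[OF assms(1)] inj_yR_odd[OF assms(1)] .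
  show "yL n1 n2 n3 c \<noteq> yR n1 n2 n3 c" if "c \<in> {1..n3}" for c
  proof
    assume "yL n1 n2 n3 c = yR n1 n2 n3 c"
    then have "c \<in> S" "c - 1 \<in> S" "bk c = bk (c - 1)"
      using yL_eq_yR[OF assms(1)] mem_Sset_succ[OF assms(1)] by blast+
    then show False
      using Sset_block_unique[OF assms(1)] that by fastforce
  qed
  show "bk c \<noteq> cyc_succ n1 (bk c') \<and> bk c' \<noteq> cyc_succ n1 (bk c)"
    if "c \<in> {1..n3}" "c' \<in> {1..n3}" "yL n1 n2 n3 c = yR n1 n2 n3 c'" for c c'
  proof -
    have "c \<in> S" "c' - 1 \<in> S" "bk c' = bk (c' - 1)"
      using yL_eq_yR[OF assms(1) that(3)] mem_Sset_succ[OF assms(1)] by blast+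
    then have "f < len (bk c)" "f < len (bk c')"
      using mem_Sset(4)[OF assms(1) _ assms(2)] by auto
    then show ?thesis
      using long_blocks_not_adjacent[OF assms(1)] blk_props(1) that(1,2) by blast
  qed
qed

lemma snd_card_odd_many:
  assumes "odd n2" "2 \<le> k" "b \<in> {1..n2}"
  shows "3 \<le> card {c \<in> {1..n3}. yL n1 n2 n3 c = b \<or> yR n1 n2 n3 c = b}"
proof -
  consider "b \<le> f" | "f < b" "b \<le> 2 * f" | "b = n2"
    using assms(3) n2_odd_eq[OF assms(1)] by fastforce
  then show ?thesis
  proof cases
    case 1
    then show ?thesis
      using card_level_disj(1) card_yL_low_level[OF assms(1)] assms(3) by simp
  next
    case 2
    then show ?thesis
      using card_level_disj(2) card_yR_mid_level[OF assms(1)] by simp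
  next
    case 3
    obtain i j where ij: "i \<in> {1..n1}" "j \<in> {1..n1}" "f < len i" "f < len j" "i \<noteq> j"
      using assms(2) card_le_Suc0_iff_eq[of "{i \<in> {1..n1}. f < len i}"] unfolding kcnt_eq by fastforce
    have len_i: "2 \<le> len i"
      using ij(3) f_pos[OF assms(1)] by linarith
    let ?s = "sblk n1 n3"
    have "?s i \<in> S" "?s j \<in> S" "?s i + 1 \<in> S1"
      using long_start_mem_Sset[OF assms(1)] ij by auto
    then have sub: "{?s i, ?s j, ?s i + 1} \<subseteq> {c \<in> {1..n3}. yL n1 n2 n3 c = b \<or> yR n1 n2 n3 c = b}"
      using block_start(1)[OF ij(1)] block_start(1)[OF ij(2)] block_second(1)[OF ij(1) len_i] 3
      by (auto simp: odd_heights[OF assms(1)])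
    have "?s i \<noteq> ?s j" "?s j \<noteq> ?s i + 1"
      using block_start(2)[OF ij(1)] block_start(2)[OF ij(2)] block_second(2)[OF ij(1) len_i] ij(5)
      by metis+
    then show ?thesis
      using card_three_columns[OF sub] by simp
  qed
qed

lemma Sset_few_facts:
  assumes "odd n2" "\<not> 2 \<le> k"
  shows "S = {1}" "S1 = {2}" "yL n1 n2 n3 1 = n2" "yR n1 n2 n3 2 = n2"
  using Sset_few[OF assms(2)] by (simp_all add: odd_heights[OF assms(1)])

context
  fixes z :: nat
  assumes odd: "odd n2" and few: "\<not> 2 \<le> k"
    and z: "z \<in> {1..n3}" "yL n1 n2 n3 z = 1" "bk z \<notin> {1, 2, n1}"
begin

abbreviation "Yz \<equiv> (yL n1 n2 n3)(z := n2)"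

lemma z_neq: "z \<noteq> 1" "z \<noteq> 2"
  using z(3) blk_one_two by auto

lemma Yz_eq_n2: "Yz c = n2 \<longleftrightarrow> c = 1 \<or> c = z"
proof (cases "c = 1 \<or> c = z")
  case True
  then show ?thesis
    using Sset_few_facts(3)[OF odd few] z_neq by auto
next
  case False
  then have "yL n1 n2 n3 c \<le> f"
    using yL_low[OF odd, of c] Sset_few_facts(1)[OF odd few] by simp
  then show ?thesis
    using False n2_odd_eq[OF odd] by simp
qed

lemma yR_eq_n2: "yR n1 n2 n3 c = n2 \<longleftrightarrow> c = 2"
proof (cases "c = 2")
  case False
  then have "yR n1 n2 n3 c \<le> 2 * f"
    using yR_mid[OF odd, of c] Sset_few_facts(2)[OF odd few] by simp
  then show ?thesis
    using False n2_odd_eq[OF odd] by simp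
qed (use Sset_few_facts(4)[OF odd few] in simp)

lemma Yz_eq_yR:
  assumes "c \<in> {1..n3}" "c' \<in> {1..n3}" "Yz c = yR n1 n2 n3 c'"
  shows "c = 1 \<or> c = z" "c' = 2"
proof -
  have "Yz c = n2 \<and> yR n1 n2 n3 c' = n2"
  proof (cases "c = z")
    case False
    then have "c \<in> S" "c' \<in> S1"
      using yL_eq_yR[OF odd] assms(3) by auto
    then show ?thesis
      using False Sset_few_facts[OF odd few] assms(3) by auto
  qed (use assms(3) in simp)
  then show "c = 1 \<or> c = z" "c' = 2"
    using Yz_eq_n2 yR_eq_n2 by auto
qed

lemma inj_Yz: "inj_on (\<lambda>c. (bk c, Yz c)) {1..n3}"
proof (rule inj_on_pair_fun_upd[OF inj_yL_odd[OF odd]])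
  fix c assume "c \<in> {1..n3}" "c \<noteq> z" "bk c = bk z"
  then have "c \<noteq> 1"
    using blk_one_two(1) z(3) by auto
  then show "yL n1 n2 n3 c \<noteq> n2"
    using Yz_eq_n2[of c] \<open>c \<noteq> z\<close> by simp
qed

lemma Yz_yR_rows_apart:
  assumes "c \<in> {1..n3}" "c' \<in> {1..n3}" "Yz c = yR n1 n2 n3 c'"
  shows "bk c \<noteq> cyc_succ n1 (bk c') \<and> bk c' \<noteq> cyc_succ n1 (bk c)"
proof -
  have c': "bk c' = 1" "cyc_succ n1 1 = 2"
    using Yz_eq_yR(2)[OF assms] blk_one_two(2) n1_ge by (auto simp: cyc_succ_def)
  consider "c = 1" | "c = z"
    using Yz_eq_yR(1)[OF assms] by blast
  then show ?thesis
  proof cases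
    case 1
    then show ?thesis using c' blk_one_two(1) by simp
  next
    case 2
    then show ?thesis using c' z(3) blk_props(1)[OF z(1)] by (auto simp: cyc_succ_def)
  qed
qed

lemma column_system_odd_few: "column_system n1 n2 n3 bk Yz (yR n1 n2 n3)"
proof
  show "2 \<le> n1" "\<And>c. c \<in> {1..n3} \<Longrightarrow> bk c \<in> {1..n1}"
    using n1_ge blk_props(1) by auto
  show "Yz c \<in> {1..n2}" for c
    using yL_range[OF odd, of c] n2_ge by (cases "c = z") auto
  show "yR n1 n2 n3 c \<in> {1..n2}" for c
    using yR_range[OF odd] .
  show "Yz c \<noteq> yR n1 n2 n3 c" if "c \<in> {1..n3}" for c
    using Yz_eq_yR[OF that that] z_neq by auto
  show "inj_on (\<lambda>c. (bk c, Yz c)) {1..n3}" "inj_on (\<lambda>c. (bk c, yR n1 n2 n3 c)) {1..n3}"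
    using inj_Yz inj_yR_odd[OF odd] .
  show "c \<in> {1..n3} \<Longrightarrow> c' \<in> {1..n3} \<Longrightarrow> Yz c = yR n1 n2 n3 c' \<Longrightarrow>
      bk c \<noteq> cyc_succ n1 (bk c') \<and> bk c' \<noteq> cyc_succ n1 (bk c)" for c c'
    by (rule Yz_yR_rows_apart)
qed

lemma snd_card_odd_few:
  assumes "b \<in> {1..n2}"
  shows "3 \<le> card {c \<in> {1..n3}. Yz c = b \<or> yR n1 n2 n3 c = b}"
proof -
  consider "b \<le> f" | "f < b" "b \<le> 2 * f" | "b = n2"
    using assms n2_odd_eq[OF odd] by fastforce
  then show ?thesis
  proof cases
    case 1
    txt \<open>Column \<open>z\<close> had height 1 before the change, so height 1 needs a fourth column.\<close>
    have "4 \<le> card {c \<in> {1..n3}. yL n1 n2 n3 c = b}" if "b = 1"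
      using card_yL_level[OF odd, of 1 4] rank_out_ge[OF finite_Sset, of n3] three_f_le[OF odd]
        Sset_few_facts(1)[OF odd few] f_pos[OF odd] that by simp
    then have "3 \<le> card ({c \<in> {1..n3}. yL n1 n2 n3 c = b} - {z})"
      using card_yL_low_level[OF odd _ 1] assms z(2) by (cases "b = 1") (auto simp: card_Diff_singleton_if)
    also have "\<dots> \<le> card {c \<in> {1..n3}. Yz c = b}"
      using n2_odd_eq[OF odd] 1 by (intro card_mono) auto
    finally show ?thesis
      by (rule card_level_disj(1))
  next
    case 2
    then show ?thesis
      using card_level_disj(2) card_yR_mid_level[OF odd] by simp
  next
    case 3
    have "{1, z, 2} \<subseteq> {c \<in> {1..n3}. Yz c = b \<or> yR n1 n2 n3 c = b}"
      using Sset_few_facts[OF odd few] z(1) z_neq 3 n1_le n1_ge by auto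
    then show ?thesis
      by (rule card_three_columns) (use z_neq in auto)
  qed
qed

end

lemma landmark_set_of_column_system:
  assumes "column_system n1 n2 n3 bk Y (yR n1 n2 n3)"
    and "\<And>b. b \<in> {1..n2} \<Longrightarrow> 3 \<le> card {c \<in> {1..n3}. Y c = b \<or> yR n1 n2 n3 c = b}"
  shows "landmark_set n1 n2 n3 (WL n1 n3 Y \<union> WR n1 n2 n3)"
proof -
  have "WL n1 n3 Y \<union> WR n1 n2 n3 = column_landmarks n1 n3 bk Y (yR n1 n2 n3)"
    by (simp add: WL_def WR_def column_landmarks_def cyc_succ_def)
  then show ?thesis
    using column_system.landmark_set_of_cards[OF assms(1) n1_ge n2_ge _ fst_card assms(2)] n1_ge n1_le by simp
qed

lemma middle_cone_landmark_set:
  assumes "middle_cone n1 n2 n3 W"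
  shows "landmark_set n1 n2 n3 W"
proof (cases "even n2 \<or> 2 \<le> k")
  case True
  then have "W = WL n1 n3 (yL n1 n2 n3) \<union> WR n1 n2 n3"
    using assms by (simp add: middle_cone_def)
  moreover have "column_system n1 n2 n3 bk (yL n1 n2 n3) (yR n1 n2 n3)"
    using True column_system_even column_system_odd_many by blast
  moreover have "3 \<le> card {c \<in> {1..n3}. yL n1 n2 n3 c = b \<or> yR n1 n2 n3 c = b}" if "b \<in> {1..n2}" for b
    using True snd_card_even snd_card_odd_many that by blast
  ultimately show ?thesis
    using landmark_set_of_column_system by simp
next
  case False
  then obtain z where "z \<in> {1..n3}" "yL n1 n2 n3 z = 1" "bk z \<notin> {1, 2, n1}"
    and "W = WL n1 n3 ((yL n1 n2 n3)(z := n2)) \<union> WR n1 n2 n3"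
    using assms by (auto simp: middle_cone_def)
  then show ?thesis
    using False landmark_set_of_column_system column_system_odd_few snd_card_odd_few by simp
qed

end

theorem mainTheorem9:
  fixes n1 n2 n3 :: nat and W :: "vtx set"
  assumes "3 \<le> n1" and "3 \<le> n2" and "n1 \<le> n3" and "n2 \<le> n3"
    and "3 * max n1 n2 \<le> 2 * n3" and "2 * n3 \<le> n1 * n2"
    and "middle_cone n1 n2 n3 W"
  shows "resolving n1 n2 n3 W \<and>
         resolving (n1 + 1) (n2 + 1) (n3 + 1) (insert (n1 + 1, n2 + 1, n3 + 1) W)"
proof -
  interpret middle_cone_params n1 n2 n3
    using assms(1-6) by unfold_locales
  interpret landmark_set n1 n2 n3 W
    using middle_cone_landmark_set[OF assms(7)] .
  show ?thesis
    using resolving_K resolving_K_succ by blast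
qed

end
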